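(* Let $\beta\geq2$ be an integer, let $$u(z)=\frac{(1-|z|^2)^{2\beta-1}}{|1-z|^{2\beta}},\quad z\in\mathbb{D},$$ and define $$a=\sum_{k=0}^{2\beta-2}\sum_{j=0}^{k}(-1)^j\binom{2\beta-1}{j}\binom{k-j+\beta-1}{k-j}^2,\qquad b=-\sum_{k=1}^{2\beta-2}2k\sum_{j=0}^{k}(-1)^j\binom{2\beta-1}{j}\binom{k-j+\beta-1}{k-j}^2.$$ Then $$\frac{1}{2\pi}\int_0^{2\pi}u(re^{i\theta})\,d\theta=a+b(1-r)+O((1-r)^2)\quad\text{as }r\to1,$$ and these $a,b$ are the constants for which, for every $\varphi\in C^2(\mathbb{T})$, $\langle u_r,\varphi\rangle=a\varphi(1)+b(1-r)\varphi(1)+O((1-r)^2)$ as $r\to1$.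
   Context: $\mathbb{D}$ is the open unit disc and $\mathbb{T}$ the unit circle. For $0\le r<1$, $u_r(e^{i\theta})=u(re^{i\theta})$, and $\langle g,\varphi\rangle=\frac{1}{2\pi}\int_0^{2\pi}g(e^{i\theta})\varphi(e^{i\theta})\,d\theta$. *)

theory Defs
  imports "HOL-Analysis.Analysis" "HOL-Library.Landau_Symbols"
begin

definition u_kernel :: "nat \<Rightarrow> complex \<Rightarrow> real" where
  "u_kernel \<beta> z = (1 - (cmod z)^2) ^ (2*\<beta> - 1) / (cmod (1 - z)) ^ (2*\<beta>)"

definition dilate :: "(complex \<Rightarrow> 'a) \<Rightarrow> real \<Rightarrow> complex \<Rightarrow> 'a" where
  "dilate u r w = u (complex_of_real r * w)"

definition pairing :: "(complex \<Rightarrow> complex) \<Rightarrow> (complex \<Rightarrow> complex) \<Rightarrow> complex" where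
  "pairing g \<phi> = complex_of_real (1 / (2*pi)) * integral {0..2*pi} (\<lambda>t. g (cis t) * \<phi> (cis t))"

definition C2_circle :: "(complex \<Rightarrow> complex) \<Rightarrow> bool" where
  "C2_circle \<phi> \<longleftrightarrow> (\<exists>f1 f2. (\<forall>t. ((\<lambda>s. \<phi> (cis s)) has_vector_derivative f1 t) (at t)) \<and>
      (\<forall>t. (f1 has_vector_derivative f2 t) (at t)) \<and> continuous_on UNIV f2)"

definition const_a :: "nat \<Rightarrow> real" where
  "const_a \<beta> = (\<Sum>k=0..2*\<beta>-2. \<Sum>j=0..k.
      (-1)^j * real ((2*\<beta>-1) choose j) * real ((k - j + \<beta> - 1) choose (k - j))^2)"

definition const_b :: "nat \<Rightarrow> real" where
  "const_b \<beta> = - (\<Sum>k=1..2*\<beta>-2. 2 * real k * (\<Sum>j=0..k.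
      (-1)^j * real ((2*\<beta>-1) choose j) * real ((k - j + \<beta> - 1) choose (k - j))^2))"

end

theory Submission
  imports Defs "HOL-Computational_Algebra.Polynomial"
begin

text \<open>
  Parseval's identity for \<open>(1 - r e^(it))^(-\<beta>) = \<Sum>_k C(k+\<beta>-1, k) r^k e^(ikt)\<close> shows that the
  circle mean of \<open>u\<close> at radius \<open>r\<close> is \<open>(1 - x)^(2\<beta>-1) \<Sum>_k C(k+\<beta>-1, k)^2 x^k\<close> with
  \<open>x = r^2\<close>. Since \<open>k \<mapsto> C(k+\<beta>-1, k)^2\<close> is a polynomial of degree \<open>2\<beta>-2\<close>, the factor
  \<open>(1 - x)^(2\<beta>-1)\<close> kills all coefficients from \<open>2\<beta>-1\<close> on, so the mean is a polynomial in
  \<open>r^2\<close>; its first-order Taylor expansion at \<open>r = 1\<close> gives \<open>a\<close> and \<open>b\<close>.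

  For \<open>\<phi> \<in> C^2(\<bbbT>)\<close> write \<open>\<phi>(e^(it)) = \<phi>(1) + c sin t + R(t)\<close> with \<open>|R(t)| \<le> M (1 - cos t)\<close>.
  The sine term integrates to zero against the kernel, which is even in \<open>t\<close>, and
  \<open>(1 - cos t) u_\<beta> \<le> (1 - r^2)^2 / (2r) u_(\<beta>-1)\<close>, where \<open>u_(\<beta>-1)\<close> has bounded circle means because
  \<open>\<beta> \<ge> 2\<close>; hence the remainder contributes \<open>O((1 - r)^2)\<close>. Testing with \<open>\<phi> = 1\<close> shows that
  no other constants have this property.
\<close>

section \<open>Absolutely convergent trigonometric series\<close>

lemma negative_binomial_sums:
  fixes w :: complex
  assumes "norm w < 1" "n \<ge> 1"
  shows "(\<lambda>k. of_nat ((k + n - 1) choose k) * w ^ k) sums inverse ((1 - w) ^ n)"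
proof -
  have "(\<lambda>k. (- 1) ^ k * (of_nat n + of_nat k - 1 gchoose k) * (- w) ^ k) sums (1 + (- w)) powr (- of_nat n)"
    by (rule one_plus_neg_powr_powser) (use assms in simp)
  moreover have "(- 1) ^ k * (of_nat n + of_nat k - 1 gchoose k) * (- w) ^ k = of_nat ((k + n - 1) choose k) * w ^ k" for k
  proof -
    have "(of_nat n + of_nat k - 1 :: complex) = of_nat (k + n - 1)"
      using assms(2) by (simp add: of_nat_diff)
    then show ?thesis by (simp add: binomial_gbinomial power_minus' mult_ac)
  qed
  moreover have "1 - w \<noteq> 0" using assms(1) by auto
  then have "(1 + (- w)) powr (- of_nat n) = inverse ((1 - w) ^ n)"
    by (simp add: powr_minus powr_nat')
  ultimately show ?thesis by simp
qed

lemma has_integral_cis_int: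
  fixes m :: int
  shows "((\<lambda>t. cis (of_int m * t)) has_integral (if m = 0 then 2 * pi else 0)) {0..2*pi}"
proof (cases "m = 0")
  case True
  then show ?thesis
    using has_integral_const_real[of "1::complex" 0 "2*pi"] by (simp add: scaleR_conv_of_real)
next
  case False
  define c where "c = \<i> * of_int m"
  have "c \<noteq> 0" using False by (simp add: c_def)
  have "((\<lambda>t. exp (of_real t * c) / c) has_vector_derivative cis (of_int m * t)) (at t within {0..2*pi})" for t
  proof -
    have "((\<lambda>z. exp (z * c) / c) has_field_derivative exp (of_real t * c) * c / c) (at (of_real t))"
      by (auto intro!: derivative_eq_intros)
    then have "((\<lambda>t. exp (of_real t * c) / c) has_vector_derivative exp (of_real t * c)) (at t)"
      using \<open>c \<noteq> 0\<close> by (auto dest: has_vector_derivative_real_field)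
    moreover have "exp (of_real t * c) = cis (of_int m * t)"
      by (simp add: c_def cis_conv_exp mult_ac)
    ultimately show ?thesis by (auto intro: has_vector_derivative_at_within)
  qed
  then have "((\<lambda>t. cis (of_int m * t)) has_integral
      exp (of_real (2*pi) * c) / c - exp (of_real 0 * c) / c) {0..2*pi}"
    by (intro fundamental_theorem_of_calculus) auto
  moreover have "exp (of_real (2*pi) * c) = 1"
    by (simp add: c_def exp_eq_1 mult_ac)
  ultimately show ?thesis using False by simp
qed

lemma continuous_on_suminf_Weierstrass:
  fixes f :: "nat \<Rightarrow> 'b::topological_space \<Rightarrow> 'a::banach"
  assumes "\<And>k. continuous_on S (f k)"
    and "\<And>k t. t \<in> S \<Longrightarrow> norm (f k t) \<le> M k" and "summable M"
  shows "continuous_on S (\<lambda>t. \<Sum>k. f k t)"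
  by (intro uniform_limit_theorem[OF _ Weierstrass_m_test[OF assms(2,3)]]
      always_eventually allI continuous_on_sum assms(1)) simp_all

lemma has_integral_suminf_Weierstrass:
  fixes f :: "nat \<Rightarrow> real \<Rightarrow> 'a::banach"
  assumes cont: "\<And>k. continuous_on {a..b} (f k)"
    and bound: "\<And>k t. t \<in> {a..b} \<Longrightarrow> norm (f k t) \<le> M k" and "summable M"
    and int: "\<And>k. (f k has_integral I k) {a..b}"
  shows "summable I" and "((\<lambda>t. \<Sum>k. f k t) has_integral (\<Sum>k. I k)) {a..b}"
proof -
  have ul: "uniform_limit {a..b} (\<lambda>N t. \<Sum>k<N. f k t) (\<lambda>t. \<Sum>k. f k t) sequentially"
    by (rule Weierstrass_m_test[OF bound \<open>summable M\<close>])
  have cont_N: "continuous_on {a..b} (\<lambda>t. \<Sum>k<N. f k t)" for N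
    by (intro continuous_on_sum cont)
  obtain J K where J: "\<And>N. ((\<lambda>t. \<Sum>k<N. f k t) has_integral J N) {a..b}"
    and K: "((\<lambda>t. \<Sum>k. f k t) has_integral K) {a..b}" and "J \<longlonglongrightarrow> K"
    using uniform_limit_integral[OF ul cont_N] by (metis trivial_limit_sequentially)
  have "J = (\<lambda>N. \<Sum>k<N. I k)"
    using has_integral_unique[OF J has_integral_sum[OF _ int]] by auto
  with \<open>J \<longlonglongrightarrow> K\<close> have "I sums K" by (simp add: sums_def)
  then show "summable I" and "((\<lambda>t. \<Sum>k. f k t) has_integral (\<Sum>k. I k)) {a..b}"
    using K by (auto simp: sums_iff)
qed

lemma trig_series_fourier_coeff:
  fixes a :: "nat \<Rightarrow> complex"
  assumes "summable (\<lambda>k. norm (a k))"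
  shows "((\<lambda>t. cis (- (real j * t)) * (\<Sum>k. a k * cis (real k * t))) has_integral
           of_real (2*pi) * a j) {0..2*pi}"
proof -
  define I where "I k = (if k = j then of_real (2*pi) * a j else 0)" for k
  have int_k: "((\<lambda>t. a k * cis (of_int (int k - int j) * t)) has_integral I k) {0..2*pi}" for k
    using has_integral_mult_right[OF has_integral_cis_int[of "int k - int j"], of "a k"]
    by (auto simp: I_def mult.commute)
  have "((\<lambda>t. \<Sum>k. a k * cis (of_int (int k - int j) * t)) has_integral (\<Sum>k. I k)) {0..2*pi}"
    by (rule has_integral_suminf_Weierstrass(2)[OF _ _ assms int_k])
      (auto intro!: continuous_intros simp: norm_mult)
  moreover have "(\<Sum>k. I k) = of_real (2*pi) * a j"
    using sums_single[of j "\<lambda>_. of_real (2*pi) * a j"] by (simp add: I_def sums_iff)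
  moreover have "cis (- (real j * t)) * (\<Sum>k. a k * cis (real k * t)) =
      (\<Sum>k. a k * cis (of_int (int k - int j) * t))" for t
  proof -
    have "summable (\<lambda>k. a k * cis (real k * t))"
      by (rule summable_norm_cancel) (simp add: norm_mult assms)
    then show ?thesis
      by (simp add: suminf_mult[symmetric] cis_mult algebra_simps)
  qed
  ultimately show ?thesis by simp
qed

lemma summable_norm_power2:
  fixes a :: "nat \<Rightarrow> 'a::real_normed_vector"
  assumes "summable (\<lambda>k. norm (a k))"
  shows "summable (\<lambda>k. norm (a k) ^ 2)"
proof (rule summable_comparison_test_ev[OF _ assms])
  have "(\<lambda>k. norm (a k)) \<longlonglongrightarrow> 0" by (rule summable_LIMSEQ_zero[OF assms])
  then have "eventually (\<lambda>k. norm (a k) < 1) sequentially" by (simp add: order_tendstoD)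
  then show "eventually (\<lambda>k. norm (norm (a k) ^ 2) \<le> norm (a k)) sequentially"
    by eventually_elim (simp add: power2_eq_square mult_left_le_one_le)
qed

lemma norm_trig_series_le:
  fixes a :: "nat \<Rightarrow> complex"
  assumes "summable (\<lambda>k. norm (a k))"
  shows "norm (\<Sum>k. a k * cis (real k * t)) \<le> (\<Sum>k. norm (a k))"
proof -
  have "norm (\<Sum>k. a k * cis (real k * t)) \<le> (\<Sum>k. norm (a k * cis (real k * t)))"
    by (rule summable_norm) (simp add: norm_mult assms)
  then show ?thesis by (simp add: norm_mult)
qed

lemma trig_series_norm_square_sums:
  fixes a :: "nat \<Rightarrow> complex"
  defines "F \<equiv> \<lambda>t. \<Sum>k. a k * cis (real k * t)"
  assumes "summable (\<lambda>k. norm (a k))"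
  shows "(\<lambda>k. cnj (a k) * (cis (- (real k * t)) * F t)) sums of_real (norm (F t) ^ 2)"
proof -
  have "(\<lambda>k. cnj (a k * cis (real k * t))) sums cnj (F t)"
    unfolding F_def
    by (intro sums_cnj[THEN iffD2] summable_sums summable_norm_cancel[of "\<lambda>k. a k * cis (real k * t)"])
      (simp add: norm_mult assms)
  from sums_mult2[OF this, of "F t"]
  have "(\<lambda>k. cnj (a k) * (cis (- (real k * t)) * F t)) sums (cnj (F t) * F t)"
    by (simp only: complex_cnj_mult cis_cnj mult.assoc)
  moreover have "cnj (F t) * F t = of_real (norm (F t) ^ 2)"
    by (simp only: complex_norm_square mult.commute)
  ultimately show ?thesis by simp
qed

lemma parseval_trig_series:
  fixes a :: "nat \<Rightarrow> complex"
  assumes "summable (\<lambda>k. norm (a k))"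
  shows "((\<lambda>t. norm (\<Sum>k. a k * cis (real k * t)) ^ 2) has_integral
           2 * pi * (\<Sum>k. norm (a k) ^ 2)) {0..2*pi}"
proof -
  define F where "F t = (\<Sum>k. a k * cis (real k * t))" for t
  have "continuous_on {0..2*pi} F"
    unfolding F_def
    by (rule continuous_on_suminf_Weierstrass[OF _ _ assms])
       (auto intro!: continuous_intros simp: norm_mult)
  have int_k: "((\<lambda>t. cnj (a k) * (cis (- (real k * t)) * F t)) has_integral
          of_real (2 * pi * norm (a k) ^ 2)) {0..2*pi}" for k
  proof -
    have "cnj (a k) * (of_real (2*pi) * a k) = of_real (2*pi) * (a k * cnj (a k))"
      by (simp add: ac_simps)
    also have "\<dots> = of_real (2 * pi * norm (a k) ^ 2)"
      by (simp only: of_real_mult complex_norm_square)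
    finally show ?thesis
      using has_integral_mult_right[OF trig_series_fourier_coeff[OF assms, of k], of "cnj (a k)"]
      by (simp only: F_def)
  qed
  have "((\<lambda>t. \<Sum>k. cnj (a k) * (cis (- (real k * t)) * F t)) has_integral
         (\<Sum>k. of_real (2 * pi * norm (a k) ^ 2))) {0..2*pi}"
  proof (rule has_integral_suminf_Weierstrass(2)[OF _ _ summable_mult2[OF assms] int_k])
    show "continuous_on {0..2*pi} (\<lambda>t. cnj (a k) * (cis (- (real k * t)) * F t))" for k
      by (intro continuous_intros \<open>continuous_on {0..2*pi} F\<close>)
    show "norm (cnj (a k) * (cis (- (real k * t)) * F t)) \<le> norm (a k) * (\<Sum>k. norm (a k))" for k t
      unfolding F_def norm_mult using norm_trig_series_le[OF assms] by (simp add: mult_left_mono)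
  qed
  also have "(\<lambda>t. \<Sum>k. cnj (a k) * (cis (- (real k * t)) * F t)) = (\<lambda>t. of_real (norm (F t) ^ 2))"
    using trig_series_norm_square_sums[OF assms] by (auto simp: F_def sums_iff)
  also have "(\<Sum>k. complex_of_real (2 * pi * norm (a k) ^ 2)) = of_real (2 * pi * (\<Sum>k. norm (a k) ^ 2))"
    using suminf_of_real[OF summable_mult[OF summable_norm_power2[OF assms], of "2*pi"]]
      suminf_mult[OF summable_norm_power2[OF assms], of "2*pi"]
    by metis
  finally have "((\<lambda>t. of_real (norm (F t) ^ 2)) has_integral
      complex_of_real (2 * pi * (\<Sum>k. norm (a k) ^ 2))) {0..2*pi}" .
  from has_integral_Re[OF this] show ?thesis
    by (simp only: Re_complex_of_real F_def)
qed

section \<open>Circle means of the kernel\<close>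

lemma summable_choose_power:
  assumes "0 \<le> r" "r < 1" "n \<ge> 1"
  shows "summable (\<lambda>k. real ((k + n - 1) choose k) * r ^ k)"
proof -
  have "norm (complex_of_real r) < 1" using assms by simp
  from sums_summable[OF negative_binomial_sums[OF this \<open>n \<ge> 1\<close>]] show ?thesis
    by (simp flip: summable_complex_of_real)
qed

lemma inverse_power_trig_series:
  assumes "0 \<le> r" "r < 1" "n \<ge> 1"
  shows "inverse ((1 - of_real r * cis t) ^ n) =
    (\<Sum>k. of_real (real ((k + n - 1) choose k) * r ^ k) * cis (real k * t))"
proof -
  have "norm (of_real r * cis t) < 1" using assms by (simp add: norm_mult)
  have series_term: "of_nat ((k + n - 1) choose k) * (of_real r * cis t) ^ k =
      of_real (real ((k + n - 1) choose k) * r ^ k) * cis (real k * t)" for k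
    by (simp add: power_mult_distrib Complex.DeMoivre)
  have "(\<lambda>k. of_real (real ((k + n - 1) choose k) * r ^ k) * cis (real k * t)) sums
      inverse ((1 - of_real r * cis t) ^ n)"
    using negative_binomial_sums[OF \<open>norm (of_real r * cis t) < 1\<close> \<open>n \<ge> 1\<close>]
    unfolding series_term .
  then show ?thesis by (rule sums_unique)
qed

lemma has_integral_inverse_norm_power:
  assumes "0 \<le> r" "r < 1" "n \<ge> 1"
  shows "((\<lambda>t. 1 / cmod (1 - of_real r * cis t) ^ (2*n)) has_integral
           2 * pi * (\<Sum>k. real ((k + n - 1) choose k) ^ 2 * (r^2) ^ k)) {0..2*pi}"
proof -
  define a where "a k = complex_of_real (real ((k + n - 1) choose k) * r ^ k)" for k
  have norm_a: "norm (a k) = real ((k + n - 1) choose k) * r ^ k" for k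
    unfolding a_def norm_of_real using assms by simp
  have "summable (\<lambda>k. norm (a k))"
    unfolding norm_a by (rule summable_choose_power[OF assms])
  note parseval_trig_series[OF this]
  moreover have "norm (a k) ^ 2 = real ((k + n - 1) choose k) ^ 2 * (r^2) ^ k" for k
    by (simp add: norm_a power_mult_distrib) (metis power_mult mult.commute)
  moreover have "norm (\<Sum>k. a k * cis (real k * t)) ^ 2 = 1 / cmod (1 - of_real r * cis t) ^ (2*n)" for t
  proof -
    have "(\<Sum>k. a k * cis (real k * t)) = inverse ((1 - of_real r * cis t) ^ n)"
      by (simp add: a_def inverse_power_trig_series[OF assms])
    then show ?thesis
      by (simp add: norm_inverse norm_power power_inverse divide_inverse power_mult)
        (metis power_mult mult.commute)
  qed
  ultimately show ?thesis by (simp only:)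
qed

lemma alternating_binomial_sum_Suc:
  fixes f :: "nat \<Rightarrow> real"
  shows "(\<Sum>j\<le>Suc n. (-1)^j * real (Suc n choose j) * f j) =
         (\<Sum>j\<le>n. (-1)^j * real (n choose j) * (f j - f (Suc j)))"
proof -
  have split: "(-1)^j * real (Suc n choose j) * f j =
      (-1)^j * real (n choose j) * f j + (if j = 0 then 0 else (-1)^j * real (n choose (j - 1)) * f j)" for j
    by (cases j) (simp_all add: algebra_simps)
  have "(\<Sum>j\<le>Suc n. (-1)^j * real (Suc n choose j) * f j) =
        (\<Sum>j\<le>Suc n. (-1)^j * real (n choose j) * f j) +
        (\<Sum>j\<le>Suc n. (if j = 0 then 0 else (-1)^j * real (n choose (j - 1)) * f j))"
    by (simp only: split sum.distrib)
  also have "(\<Sum>j\<le>Suc n. (-1)^j * real (n choose j) * f j) = (\<Sum>j\<le>n. (-1)^j * real (n choose j) * f j)"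
    by (simp add: sum.atMost_Suc)
  also have "(\<Sum>j\<le>Suc n. (if j = 0 then 0 else (-1)^j * real (n choose (j - 1)) * f j)) =
        (\<Sum>j\<le>n. - ((-1)^j * real (n choose j) * f (Suc j)))"
    by (subst sum.atMost_Suc_shift) simp
  finally show ?thesis by (simp add: sum_subtractf algebra_simps sum_negf)
qed

lemma degree_diff_pcompose_shift_less:
  fixes q :: "real poly"
  assumes "degree q > 0"
  shows "degree (q - pcompose q [:1, 1:]) < degree q"
proof -
  let ?p = "q - pcompose q [:1, 1:]"
  have deg: "degree (pcompose q [:1, 1:]) = degree q"
    by (simp add: degree_pcompose)
  have "lead_coeff (pcompose q [:1, 1:]) = lead_coeff q"
    by (simp add: lead_coeff_comp)
  with deg have "degree ?p \<le> degree q" and "coeff ?p (degree q) = 0"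
    using degree_diff_le[of q "degree q" "pcompose q [:1, 1:]"] by simp_all
  then show ?thesis
    using assms by (metis degree_0 le_neq_implies_less leading_coeff_0_iff)
qed

lemma alternating_binomial_sum_poly_eq_0:
  fixes q :: "real poly"
  shows "degree q < n \<Longrightarrow> (\<Sum>j\<le>n. (-1)^j * real (n choose j) * poly q (real j)) = 0"
proof (induction n arbitrary: q)
  case 0
  then show ?case by simp
next
  case (Suc n)
  define q' where "q' = q - pcompose q [:1, 1:]"
  have "poly q (real j) - poly q (real (Suc j)) = poly q' (real j)" for j
    by (simp add: q'_def poly_pcompose algebra_simps)
  then have "(\<Sum>j\<le>Suc n. (-1)^j * real (Suc n choose j) * poly q (real j)) =
        (\<Sum>j\<le>n. (-1)^j * real (n choose j) * poly q' (real j))"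
    by (simp only: alternating_binomial_sum_Suc)
  also have "\<dots> = 0"
  proof (cases "degree q = 0")
    case True
    then obtain c where "q = [:c:]" by (metis degree_eq_zeroE)
    then show ?thesis by (simp add: q'_def)
  next
    case False
    then have "degree q' < n"
      using degree_diff_pcompose_shift_less[of q] Suc.prems by (simp add: q'_def)
    then show ?thesis by (rule Suc.IH)
  qed
  finally show ?case .
qed

lemma choose_polynomial:
  assumes "n \<ge> 1"
  obtains P :: "real poly" where "degree P \<le> n - 1" and "\<And>m. poly P (real m) = real ((m + n - 1) choose m)"
proof
  define P :: "real poly" where "P = smult (1 / fact (n-1)) (\<Prod>i<n-1. [:1 + of_nat i, 1:])"
  have "degree (\<Prod>i<n-1. [:1 + of_nat i, 1::real:]) \<le> (\<Sum>i<n-1. (degree \<circ> (\<lambda>i. [:1 + of_nat i, 1::real:])) i)"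
    by (rule degree_prod_sum_le) simp
  also have "\<dots> = n - 1" by simp
  finally show "degree P \<le> n - 1"
    unfolding P_def by (meson degree_smult_le order_trans)
  show "poly P (real m) = real ((m + n - 1) choose m)" for m
  proof -
    have "real ((m + n - 1) choose m) = real ((m + n - 1) choose (n - 1))"
      using binomial_symmetric[of m "m + n - 1"] assms by simp
    also have "\<dots> = pochhammer (real m + 1) (n - 1) / fact (n - 1)"
      using assms by (simp add: binomial_gbinomial gbinomial_pochhammer' of_nat_diff)
    also have "\<dots> = poly P (real m)"
      by (simp add: P_def pochhammer_prod poly_prod add_ac atLeast0LessThan)
    finally show ?thesis by simp
  qed
qed

text \<open>The coefficient of \<open>x^k\<close> in \<open>(1 - x)^(2n-1) \<Sum>_j C(j+n-1, j)^2 x^j\<close>.\<close>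
definition mean_coeff :: "nat \<Rightarrow> nat \<Rightarrow> real" where
  "mean_coeff n k = (\<Sum>j=0..k. (-1)^j * real ((2*n-1) choose j) * real ((k - j + n - 1) choose (k - j))^2)"

text \<open>For \<open>k \<ge> 2n - 1\<close> this is the \<open>(2n-1)\<close>-st finite difference of the polynomial
  \<open>j \<mapsto> C(k-j+n-1, k-j)^2\<close> of degree \<open>2n - 2\<close>.\<close>
lemma mean_coeff_eq_0:
  assumes "n \<ge> 1" and "k \<ge> 2*n - 1"
  shows "mean_coeff n k = 0"
proof -
  obtain P :: "real poly" where deg_P: "degree P \<le> n - 1"
    and poly_P: "\<And>m. poly P (real m) = real ((m + n - 1) choose m)"
    using choose_polynomial[OF \<open>n \<ge> 1\<close>] by blast
  define q where "q = pcompose (P^2) [:real k, -1:]"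
  have "degree q \<le> degree (P^2)"
    unfolding q_def using degree_pcompose[of "P^2" "[:real k, -1:]"] by simp
  also have "\<dots> \<le> 2 * (n - 1)"
    using degree_power_le[of P 2] deg_P by simp
  finally have "degree q < 2*n - 1" using \<open>n \<ge> 1\<close> by simp
  have "mean_coeff n k = (\<Sum>j\<le>2*n-1. (-1)^j * real ((2*n-1) choose j) * real ((k - j + n - 1) choose (k - j))^2)"
    unfolding mean_coeff_def atLeast0AtMost
    by (rule sum.mono_neutral_right) (use assms in auto)
  also have "\<dots> = (\<Sum>j\<le>2*n-1. (-1)^j * real ((2*n-1) choose j) * poly q (real j))"
  proof (rule sum.cong[OF refl])
    fix j assume "j \<in> {..2*n-1}"
    then have "poly q (real j) = poly P (real (k - j))^2"
      using assms by (simp add: q_def poly_pcompose of_nat_diff)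
    then show "(-1)^j * real ((2*n-1) choose j) * real ((k - j + n - 1) choose (k - j))^2 =
               (-1)^j * real ((2*n-1) choose j) * poly q (real j)"
      by (simp add: poly_P)
  qed
  also have "\<dots> = 0"
    by (rule alternating_binomial_sum_poly_eq_0) fact
  finally show ?thesis .
qed

lemma summable_choose_square_power:
  assumes "0 \<le> x" "x < 1" "n \<ge> 1"
  shows "summable (\<lambda>k. real ((k + n - 1) choose k)^2 * x^k)"
proof -
  have "summable (\<lambda>k. real ((k + n - 1) choose k) * sqrt x ^ k)"
    using assms by (intro summable_choose_power) auto
  then have "summable (\<lambda>k. norm (real ((k + n - 1) choose k) * sqrt x ^ k) ^ 2)"
    using assms by (intro summable_norm_power2) (simp add: abs_mult)
  moreover have "(sqrt x ^ k)^2 = x ^ k" for k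
    using assms by (metis power_mult mult.commute real_sqrt_pow2)
  ultimately show ?thesis
    using assms by (simp add: power_mult_distrib abs_mult mult.commute)
qed

lemma sums_alternating_binomial_power:
  fixes x :: real
  shows "(\<lambda>j. (-1)^j * real (m choose j) * x^j) sums (1 - x)^m"
proof -
  have "(\<lambda>j. (-1)^j * real (m choose j) * x^j) sums (\<Sum>j\<le>m. (-1)^j * real (m choose j) * x^j)"
    by (rule sums_finite) auto
  also have "(\<Sum>j\<le>m. (-1)^j * real (m choose j) * x^j) = (\<Sum>j\<le>m. of_nat (m choose j) * (-x)^j * 1^(m-j))"
  proof (intro sum.cong refl)
    fix j
    have "(-x)^j = (-1)^j * x^j" by (rule power_minus)
    then show "(-1)^j * real (m choose j) * x^j = of_nat (m choose j) * (-x)^j * 1^(m-j)" by simp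
  qed
  also have "\<dots> = (-x + 1)^m" by (rule binomial_ring[symmetric])
  finally show ?thesis by simp
qed

lemma one_minus_power_mult_choose_square_series:
  assumes "0 \<le> x" "x < 1" "n \<ge> 1"
  shows "(1 - x)^(2*n-1) * (\<Sum>k. real ((k+n-1) choose k)^2 * x^k) = (\<Sum>k=0..2*n-2. mean_coeff n k * x^k)"
proof -
  define a where "a j = (-1)^j * real ((2*n-1) choose j) * x^j" for j
  define b where "b k = real ((k+n-1) choose k)^2 * x^k" for k
  have "summable (\<lambda>k. norm (a k))"
    by (rule summable_finite[of "{..2*n-1}"]) (auto simp: a_def)
  moreover have "summable (\<lambda>k. norm (b k))"
    using summable_choose_square_power[OF assms] assms by (simp add: b_def)
  ultimately have "(\<lambda>k. \<Sum>i\<le>k. a i * b (k - i)) sums ((\<Sum>k. a k) * (\<Sum>k. b k))"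
    by (rule Cauchy_product_sums)
  moreover have "(\<Sum>i\<le>k. a i * b (k - i)) = mean_coeff n k * x^k" for k
  proof -
    have "a i * b (k - i) = (-1)^i * real ((2*n-1) choose i) * real ((k - i + n - 1) choose (k - i))^2 * x^k"
      if "i \<le> k" for i
      using that by (simp add: a_def b_def power_add[symmetric])
    then show ?thesis
      by (simp add: mean_coeff_def sum_distrib_right atLeast0AtMost)
  qed
  moreover have "(\<Sum>k. a k) = (1 - x)^(2*n-1)"
    unfolding a_def by (rule sums_unique[OF sums_alternating_binomial_power, symmetric])
  ultimately have "(\<lambda>k. mean_coeff n k * x^k) sums ((1 - x)^(2*n-1) * (\<Sum>k. b k))"
    by simp
  moreover have "(\<lambda>k. mean_coeff n k * x^k) sums (\<Sum>k=0..2*n-2. mean_coeff n k * x^k)"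
    by (rule sums_finite) (use mean_coeff_eq_0 \<open>n \<ge> 1\<close> in auto)
  ultimately show ?thesis
    unfolding b_def by (rule sums_unique2)
qed

definition circle_mean :: "(complex \<Rightarrow> real) \<Rightarrow> real \<Rightarrow> real" where
  "circle_mean f r = (1 / (2*pi)) * integral {0..2*pi} (\<lambda>t. f (complex_of_real r * cis t))"

lemma u_kernel_circle:
  assumes "0 \<le> r"
  shows "u_kernel n (of_real r * cis t) = (1 - r^2)^(2*n-1) / cmod (1 - of_real r * cis t) ^ (2*n)"
  using assms by (simp add: u_kernel_def norm_mult)

lemma has_integral_u_kernel_circle:
  assumes "0 \<le> r" "r < 1" "n \<ge> 1"
  shows "((\<lambda>t. u_kernel n (of_real r * cis t)) has_integral
           2 * pi * (\<Sum>k=0..2*n-2. mean_coeff n k * (r^2)^k)) {0..2*pi}"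
proof -
  have "(1 - r^2)^(2*n-1) * (\<Sum>k. real ((k + n - 1) choose k) ^ 2 * (r^2) ^ k) =
      (\<Sum>k=0..2*n-2. mean_coeff n k * (r^2)^k)"
    using assms by (intro one_minus_power_mult_choose_square_series) (auto simp: power_less_one_iff)
  with has_integral_mult_right[OF has_integral_inverse_norm_power[OF assms], of "(1 - r^2)^(2*n-1)"]
  show ?thesis
    by (simp add: u_kernel_circle[OF \<open>0 \<le> r\<close>] mult.left_commute)
qed

lemma circle_mean_u_kernel:
  assumes "0 \<le> r" "r < 1" "n \<ge> 1"
  shows "circle_mean (u_kernel n) r = (\<Sum>k=0..2*n-2. mean_coeff n k * (r^2)^k)"
  using integral_unique[OF has_integral_u_kernel_circle[OF assms]] by (simp add: circle_mean_def)

section \<open>Expansion of the circle mean at \<open>r = 1\<close>\<close>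

lemma abs_power_minus_linear_le:
  fixes r :: real
  assumes "0 \<le> r" "r \<le> 1"
  shows "\<bar>r^m - 1 + real m * (1 - r)\<bar> \<le> real m^2 * (1 - r)^2"
proof -
  have bound: "0 \<le> 1 - r^i \<and> 1 - r^i \<le> real m * (1 - r)" if "i < m" for i
  proof
    show "0 \<le> 1 - r^i" using assms by (simp add: power_le_one)
    have "1 + real i * (- (1 - r)) \<le> (1 + (- (1 - r)))^i"
      by (rule Bernoulli_inequality) (use assms in simp)
    then have "1 - r^i \<le> real i * (1 - r)" by (simp add: algebra_simps)
    also have "\<dots> \<le> real m * (1 - r)" using that assms by (intro mult_right_mono) auto
    finally show "1 - r^i \<le> real m * (1 - r)" .
  qed
  have "0 \<le> (\<Sum>i<m. 1 - r^i)" and "(\<Sum>i<m. 1 - r^i) \<le> real m * (real m * (1 - r))"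
    using bound sum_mono[of "{..<m}" "\<lambda>i. 1 - r^i" "\<lambda>i. real m * (1 - r)"]
    by (auto intro: sum_nonneg)
  moreover have "r^m - 1 + real m * (1 - r) = (1 - r) * (\<Sum>i<m. 1 - r^i)"
    using one_diff_power_eq[of r m] by (simp add: sum_subtractf algebra_simps)
  ultimately have "\<bar>r^m - 1 + real m * (1 - r)\<bar> \<le> (1 - r) * (real m * (real m * (1 - r)))"
    using assms by (simp add: abs_mult mult_left_mono)
  then show ?thesis
    by (simp add: power2_eq_square mult_ac)
qed

lemma sum_powers_expansion_at_left_1:
  fixes c :: "nat \<Rightarrow> real"
  shows "(\<lambda>r. (\<Sum>k\<in>K. c k * r ^ e k) - ((\<Sum>k\<in>K. c k) - (\<Sum>k\<in>K. real (e k) * c k) * (1 - r)))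
           \<in> O[at_left 1](\<lambda>r. (1 - r)^2)"
proof -
  have "(\<lambda>r. r ^ e k - 1 + real (e k) * (1 - r)) \<in> O[at_left 1](\<lambda>r. (1 - r)^2)" for k
  proof (rule bigoI)
    show "eventually (\<lambda>r. norm (r ^ e k - 1 + real (e k) * (1 - r)) \<le> real (e k)^2 * norm ((1 - r)^2))
        (at_left (1::real))"
      using eventually_at_left_real[OF zero_less_one]
      by eventually_elim (simp add: abs_power_minus_linear_le)
  qed
  then have "(\<lambda>r. \<Sum>k\<in>K. c k * (r ^ e k - 1 + real (e k) * (1 - r))) \<in> O[at_left 1](\<lambda>r. (1 - r)^2)"
    by (intro big_sum_in_bigo) simp
  then show ?thesis
    by (simp add: sum_subtractf sum.distrib sum_distrib_left sum_distrib_right algebra_simps)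
qed

text \<open>\<open>const_a n\<close> and \<open>const_b n\<close> are \<open>P(1)\<close> and \<open>-2 P\<Zprime>(1)\<close> for \<open>P(x) = \<Sum>_k mean_coeff n k x^k\<close>.\<close>
lemma circle_mean_u_kernel_expansion:
  assumes "n \<ge> 1"
  shows "(\<lambda>r. circle_mean (u_kernel n) r - (const_a n + const_b n * (1 - r))) \<in> O[at_left 1](\<lambda>r. (1 - r)^2)"
proof -
  let ?K = "{0..2*n-2}"
  have "const_a n = (\<Sum>k\<in>?K. mean_coeff n k)"
    by (simp add: const_a_def mean_coeff_def)
  moreover have "const_b n = - (\<Sum>k\<in>?K. real (2*k) * mean_coeff n k)"
  proof -
    have "(\<Sum>k=1..2*n-2. 2 * real k * mean_coeff n k) = (\<Sum>k\<in>?K. 2 * real k * mean_coeff n k)"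
      by (rule sum.mono_neutral_left) auto
    then show ?thesis by (simp add: const_b_def mean_coeff_def)
  qed
  moreover have "eventually (\<lambda>r. circle_mean (u_kernel n) r = (\<Sum>k\<in>?K. mean_coeff n k * r ^ (2*k))) (at_left 1)"
    using eventually_at_left_real[OF zero_less_one]
    by eventually_elim (use assms circle_mean_u_kernel in \<open>auto simp: power_mult\<close>)
  ultimately show ?thesis
    using sum_powers_expansion_at_left_1[of "mean_coeff n" "\<lambda>k. 2*k" ?K]
    by (subst landau_o.big.in_cong) (auto elim!: eventually_mono simp: algebra_simps)
qed

section \<open>Periodic functions of class \<open>C^2\<close>\<close>

lemma norm_diff_le_second_derivative_bound:
  fixes h :: "real \<Rightarrow> 'a::real_normed_vector"
  assumes h': "\<And>x. (h has_vector_derivative h' x) (at x)"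
    and h'': "\<And>x. (h' has_vector_derivative h'' x) (at x)"
    and "h' a = 0" and bound: "\<And>x. x \<in> closed_segment a t \<Longrightarrow> norm (h'' x) \<le> B"
  shows "norm (h t - h a) \<le> 3 * B * (t - a)^2"
proof -
  let ?S = "closed_segment a t"
  have a: "a \<in> ?S" by simp
  have "0 \<le> B" using bound[OF a] norm_ge_zero order_trans by blast
  have h'_bound: "norm (h' x) \<le> 3 * B * \<bar>t - a\<bar>" if x: "x \<in> ?S" for x
  proof -
    have "norm (h' x - h' a - (x - a) *\<^sub>R h'' a) \<le> norm (x - a) * (2 * B)"
    proof (rule vector_differentiable_bound_linearization[of ?S])
      show "closed_segment a x \<subseteq> ?S" using x by (simp add: subset_closed_segment)
      show "norm (h'' y - h'' a) \<le> 2 * B" if "y \<in> ?S" for y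
        using bound[OF that] bound[OF a] norm_triangle_ineq4[of "h'' y" "h'' a"] by simp
    qed (use h'' a in \<open>auto intro: has_vector_derivative_at_within\<close>)
    moreover have "norm ((x - a) *\<^sub>R h'' a) \<le> norm (x - a) * B"
      using bound[OF a] by (simp add: mult_left_mono)
    ultimately have "norm (h' x) \<le> 3 * B * norm (x - a)"
      using \<open>h' a = 0\<close> norm_triangle_sub[of "h' x" "(x - a) *\<^sub>R h'' a"]
      by (simp add: algebra_simps)
    also have "\<dots> \<le> 3 * B * \<bar>t - a\<bar>"
      using dist_in_closed_segment[OF x] \<open>0 \<le> B\<close>
      by (intro mult_left_mono) (simp_all add: dist_real_def abs_minus_commute)
    finally show ?thesis .
  qed
  have "norm (h t - h a - (t - a) *\<^sub>R h' a) \<le> norm (t - a) * (3 * B * \<bar>t - a\<bar>)"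
    by (rule vector_differentiable_bound_linearization[of ?S])
      (use h' a h'_bound \<open>h' a = 0\<close> in \<open>auto intro: has_vector_derivative_at_within\<close>)
  then have "norm (h t - h a) \<le> 3 * B * \<bar>t - a\<bar>^2"
    using \<open>h' a = 0\<close> by (simp add: power2_eq_square mult_ac)
  then show ?thesis by simp
qed

lemma sq_le_one_minus_cos:
  assumes "0 \<le> t" "t \<le> pi"
  shows "t^2 \<le> 18 * (1 - cos t)"
proof -
  define y where "y = t / 2"
  have y: "0 \<le> y" "y < 2" using assms pi_less_4 by (auto simp: y_def)
  have "\<bar>sin y - (\<Sum>m<3. sin_coeff m * y ^ m)\<bar> \<le> inverse (fact 3) * \<bar>y\<bar> ^ 3"
    by (rule Maclaurin_sin_bound)
  moreover have "(\<Sum>m<3. sin_coeff m * y ^ m) = y"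
    by (simp add: eval_nat_numeral sin_coeff_def)
  ultimately have "y - y^3 / 6 \<le> sin y"
    using y by (simp add: eval_nat_numeral abs_if split: if_splits)
  moreover have "y * y^2 \<le> y * 4"
    using y power_mono[of y 2 2] by (intro mult_left_mono) auto
  ultimately have "y / 3 \<le> sin y"
    by (simp add: power3_eq_cube power2_eq_square)
  then have "(y / 3)^2 \<le> (sin y)^2"
    by (rule power_mono) (use y in simp)
  moreover have "cos t = 1 - 2 * sin y ^ 2"
    using cos_double_sin[of y] by (simp add: y_def)
  ultimately show ?thesis by (simp add: y_def power_divide)
qed

lemma periodic_derivative:
  fixes g :: "real \<Rightarrow> 'a::real_normed_vector"
  assumes g': "\<And>t. (g has_vector_derivative g' t) (at t)" and periodic: "\<And>t. g (t + p) = g t"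
  shows "g' (t + p) = g' t"
proof -
  have "((\<lambda>s. s + p) has_vector_derivative 1) (at t)"
    by (auto intro!: derivative_eq_intros)
  from vector_diff_chain_at[OF this g'[of "t + p"]]
  have "((\<lambda>s. g (s + p)) has_vector_derivative g' (t + p)) (at t)"
    by (simp add: o_def)
  then show ?thesis
    using g'[of t] by (simp add: periodic vector_derivative_unique_at)
qed

text \<open>Subtracting \<open>sin t \<cdot> g\<Zprime>(0)\<close> makes the derivative vanish at both ends of \<open>[0, 2\<pi>]\<close>, so the
  remainder is quadratically small near \<open>0\<close> and near \<open>2\<pi>\<close>, as is \<open>1 - cos t\<close>.\<close>
lemma periodic_second_order_bound:
  fixes g :: "real \<Rightarrow> 'a::real_normed_vector"
  assumes g': "\<And>t. (g has_vector_derivative g' t) (at t)"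
    and g'': "\<And>t. (g' has_vector_derivative g'' t) (at t)"
    and "continuous_on UNIV g''" and periodic: "\<And>t. g (t + 2*pi) = g t"
  obtains M where "\<And>t. t \<in> {0..2*pi} \<Longrightarrow> norm (g t - g 0 - sin t *\<^sub>R g' 0) \<le> M * (1 - cos t)"
proof -
  define h where "h t = g t - sin t *\<^sub>R g' 0" for t
  define h' where "h' t = g' t - cos t *\<^sub>R g' 0" for t
  define h'' where "h'' t = g'' t + sin t *\<^sub>R g' 0" for t
  have dh: "(h has_vector_derivative h' t) (at t)" and dh': "(h' has_vector_derivative h'' t) (at t)" for t
    unfolding h_def h'_def h''_def by (auto intro!: derivative_eq_intros g' g'')
  have "h' 0 = 0" and "h' (2*pi) = 0"
    using periodic_derivative[OF g' periodic, of 0] by (simp_all add: h'_def)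
  have "h (2*pi) = h 0"
    using periodic[of 0] by (simp add: h_def)
  have "continuous_on {0..2*pi} h''"
    unfolding h''_def by (intro continuous_intros continuous_on_subset[OF \<open>continuous_on UNIV g''\<close>]) auto
  then obtain B where "B \<ge> 0" and B: "\<And>t. t \<in> {0..2*pi} \<Longrightarrow> norm (h'' t) \<le> B"
    using continuous_on_compact_bound[OF compact_Icc] by blast
  show ?thesis
  proof
    fix t :: real assume t: "t \<in> {0..2*pi}"
    have "closed_segment 0 t \<subseteq> {0..2*pi}" and "closed_segment (2*pi) t \<subseteq> {0..2*pi}"
      using t by (auto simp: closed_segment_eq_real_ivl)
    then have near_0: "norm (h t - h 0) \<le> 3 * B * (t - 0)^2"
      and near_2pi: "norm (h t - h (2*pi)) \<le> 3 * B * (t - 2*pi)^2"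
      by (intro norm_diff_le_second_derivative_bound[OF dh dh'] \<open>h' 0 = 0\<close> \<open>h' (2*pi) = 0\<close>;
          use B in blast)+
    have "norm (h t - h 0) \<le> 3 * B * (18 * (1 - cos t))"
    proof (cases "t \<le> pi")
      case True
      with near_0 sq_le_one_minus_cos[of t] t \<open>B \<ge> 0\<close> show ?thesis
        by (smt (verit) atLeastAtMost_iff mult_left_mono)
    next
      case False
      have "cos (2*pi - t) = cos t" by (simp add: cos_diff)
      with near_2pi \<open>h (2*pi) = h 0\<close> sq_le_one_minus_cos[of "2*pi - t"] False t \<open>B \<ge> 0\<close>
        power2_commute[of t "2*pi"] show ?thesis
        by (smt (verit) atLeastAtMost_iff mult_left_mono)
    qed
    then show "norm (g t - g 0 - sin t *\<^sub>R g' 0) \<le> 54 * B * (1 - cos t)"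
      by (simp add: h_def algebra_simps)
  qed
qed

section \<open>Pairing the kernel with test functions\<close>

lemma has_integral_0_antisymmetric:
  fixes f :: "real \<Rightarrow> 'a::banach"
  assumes "f integrable_on {a..b}" and antisym: "\<And>t. f (a + b - t) = - f t"
  shows "(f has_integral 0) {a..b}"
proof -
  define I where "I = integral {a..b} f"
  have I: "(f has_integral I) {a..b}" unfolding I_def using assms(1) by blast
  then have "((\<lambda>x. f (- x)) has_integral I) {-b..-a}" by simp
  then have "((\<lambda>t. f (a + b - t)) has_integral I) {a..b}"
    using has_integral_shift_Icc_real[of "\<lambda>x. f (- x)" "- (a + b)" I a b] by (simp add: o_def add.commute)
  then have "((\<lambda>t. - f t) has_integral I) {a..b}"
    by (simp add: antisym)
  then have "(f has_integral - I) {a..b}"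
    using has_integral_neg[of "\<lambda>t. - f t" I] by simp
  with I have "I = - I"
    by (rule has_integral_unique)
  then have "2 *\<^sub>R I = 0"
    by (simp add: scaleR_2 eq_neg_iff_add_eq_0)
  then have "I = 0" by simp
  with I show ?thesis by simp
qed

lemma u_kernel_cnj: "u_kernel n (cnj z) = u_kernel n z"
proof -
  have "cmod (1 - cnj z) = cmod (1 - z)"
    by (metis complex_cnj_diff complex_cnj_one complex_mod_cnj)
  then show ?thesis by (simp add: u_kernel_def)
qed

lemma norm_one_minus_cis_sq:
  "cmod (1 - of_real r * cis t) ^ 2 = (1 - r)^2 + 2 * r * (1 - cos t)"
proof -
  have "cmod (1 - of_real r * cis t) ^ 2 = (1 - r * cos t)^2 + (r * sin t)^2"
    by (simp add: cmod_power2)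
  also have "\<dots> = (1 - r)^2 + 2 * r * (1 - cos t)"
    by (simp add: power_mult_distrib sin_squared_eq) (simp add: power2_eq_square algebra_simps)
  finally show ?thesis .
qed

lemma norm_one_minus_cis_pos:
  assumes "0 \<le> r" "r < 1"
  shows "cmod (1 - of_real r * cis t) > 0"
proof -
  have "0 < (1 - r)^2 + 2 * r * (1 - cos t)"
    using assms by (intro add_pos_nonneg) auto
  then have "0 < cmod (1 - of_real r * cis t) ^ 2"
    by (simp only: norm_one_minus_cis_sq)
  then show ?thesis by simp
qed

lemma continuous_on_u_kernel_circle:
  assumes "0 \<le> r" "r < 1"
  shows "continuous_on S (\<lambda>t. u_kernel n (of_real r * cis t))"
proof -
  have "continuous_on S (\<lambda>t. (1 - r^2)^(2*n-1) / cmod (1 - of_real r * cis t) ^ (2*n))"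
    using norm_one_minus_cis_pos[OF assms] by (intro continuous_intros) auto
  then show ?thesis by (simp add: u_kernel_circle[OF \<open>0 \<le> r\<close>])
qed

lemma has_integral_u_kernel_sin:
  assumes "0 \<le> r" "r < 1"
  shows "((\<lambda>t. u_kernel n (of_real r * cis t) * sin t) has_integral 0) {0..2*pi}"
proof (rule has_integral_0_antisymmetric)
  show "(\<lambda>t. u_kernel n (of_real r * cis t) * sin t) integrable_on {0..2*pi}"
    by (intro integrable_continuous_real continuous_intros continuous_on_u_kernel_circle assms)
  fix t
  have "of_real r * cis (0 + 2*pi - t) = cnj (of_real r * cis t)"
    by (simp add: complex_eq_iff cos_diff sin_diff)
  then have "u_kernel n (of_real r * cis (0 + 2*pi - t)) = u_kernel n (of_real r * cis t)"
    by (simp only: u_kernel_cnj)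
  then show "u_kernel n (of_real r * cis (0 + 2*pi - t)) * sin (0 + 2*pi - t) =
      - (u_kernel n (of_real r * cis t) * sin t)"
    by (simp add: sin_diff)
qed

text \<open>The factor \<open>1 - cos t\<close> is absorbed by one power of \<open>|1 - r e^(it)|^2\<close>; this is why
  \<open>\<beta> \<ge> 2\<close> is needed.\<close>
lemma u_kernel_Suc_mult_one_minus_cos_le:
  assumes "n \<ge> 1" "0 < r" "r < 1"
  shows "u_kernel (Suc n) (of_real r * cis t) * (1 - cos t) \<le> (1 - r^2)^2 / (2*r) * u_kernel n (of_real r * cis t)"
proof -
  define d where "d = cmod (1 - of_real r * cis t)"
  have d2: "d^2 = (1 - r)^2 + 2 * r * (1 - cos t)"
    unfolding d_def by (rule norm_one_minus_cis_sq)
  have "d > 0" unfolding d_def using assms by (intro norm_one_minus_cis_pos) auto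
  have u_Suc: "u_kernel (Suc n) (of_real r * cis t) = (1 - r^2)^2 / d^2 * u_kernel n (of_real r * cis t)"
  proof -
    have exps: "2 * Suc n - 1 = 2 + (2*n - 1)" "2 * Suc n = 2 + 2*n" using assms by simp_all
    have "u_kernel (Suc n) (of_real r * cis t) = (1 - r^2)^(2 * Suc n - 1) / d^(2 * Suc n)"
      using assms by (simp add: u_kernel_circle d_def)
    also have "\<dots> = (1 - r^2)^2 / d^2 * ((1 - r^2)^(2*n - 1) / d^(2*n))"
      by (simp only: exps(1)) (simp only: exps(2) power_add times_divide_times_eq)
    also have "\<dots> = (1 - r^2)^2 / d^2 * u_kernel n (of_real r * cis t)"
      using assms by (simp add: u_kernel_circle d_def)
    finally show ?thesis .
  qed
  have "1 - cos t \<le> d^2 / (2*r)"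
    using assms d2 by (simp add: field_simps)
  moreover have "0 \<le> 1 - r^2"
    using assms by (simp add: abs_square_le_1)
  then have "0 \<le> (1 - r^2)^2 / d^2 * u_kernel n (of_real r * cis t)"
    using assms by (simp add: u_kernel_circle)
  ultimately have "u_kernel (Suc n) (of_real r * cis t) * (1 - cos t) \<le>
      (1 - r^2)^2 / d^2 * u_kernel n (of_real r * cis t) * (d^2 / (2*r))"
    unfolding u_Suc by (rule mult_left_mono)
  also have "\<dots> = (1 - r^2)^2 / (2*r) * u_kernel n (of_real r * cis t)"
    using \<open>d > 0\<close> by (simp add: field_simps)
  finally show ?thesis .
qed

lemma u_kernel_nonneg:
  assumes "cmod z \<le> 1"
  shows "0 \<le> u_kernel n z"
  using assms by (simp add: u_kernel_def abs_square_le_1)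

lemma circle_mean_u_kernel_le:
  assumes "0 \<le> r" "r < 1" "n \<ge> 1"
  shows "circle_mean (u_kernel n) r \<le> (\<Sum>k=0..2*n-2. \<bar>mean_coeff n k\<bar>)"
  unfolding circle_mean_u_kernel[OF assms]
proof (rule sum_mono)
  fix k
  have "0 \<le> (r^2)^k" "(r^2)^k \<le> 1"
    using assms by (simp_all add: power_le_one abs_square_le_1)
  then show "mean_coeff n k * (r^2)^k \<le> \<bar>mean_coeff n k\<bar>"
    using mult_right_mono[OF abs_ge_self[of "mean_coeff n k"]] mult_left_le[of "(r^2)^k" "\<bar>mean_coeff n k\<bar>"]
    by fastforce
qed

lemma circle_mean_u_kernel_nonneg:
  assumes "0 \<le> r" "r < 1"
  shows "0 \<le> circle_mean (u_kernel n) r"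
  unfolding circle_mean_def using assms
  by (intro mult_nonneg_nonneg integral_nonneg u_kernel_nonneg integrable_continuous_real
      continuous_on_u_kernel_circle) (auto simp: norm_mult)

lemma one_minus_square_square_div_le:
  fixes r :: real
  assumes "1/2 \<le> r" "r \<le> 1"
  shows "(1 - r^2)^2 / (2*r) \<le> 4 * (1 - r)^2"
proof -
  have "(1 - r^2)^2 = (1 - r)^2 * (1 + r)^2" by (simp add: power2_eq_square algebra_simps)
  also have "\<dots> \<le> (1 - r)^2 * (4 * (2*r))"
    using assms power_mono[of "1 + r" 2 2] by (intro mult_left_mono) auto
  finally show ?thesis using assms by (simp add: divide_le_eq mult_ac)
qed

lemma norm_integral_u_kernel_remainder_le:
  fixes R :: "real \<Rightarrow> complex"
  assumes "n \<ge> 1" "1/2 \<le> r" "r < 1" and "continuous_on {0..2*pi} R"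
    and bound: "\<And>t. t \<in> {0..2*pi} \<Longrightarrow> norm (R t) \<le> M * (1 - cos t)"
  shows "norm (integral {0..2*pi} (\<lambda>t. of_real (u_kernel (Suc n) (of_real r * cis t)) * R t))
           \<le> 8 * pi * M * (\<Sum>k=0..2*n-2. \<bar>mean_coeff n k\<bar>) * (1 - r)^2"
proof -
  define c where "c = (1 - r^2)^2 / (2*r)"
  have "norm (R pi) \<le> 2 * M" using bound[of pi] by simp
  then have "0 \<le> M" using norm_ge_zero[of "R pi"] by linarith
  have "0 \<le> c" by (simp add: c_def assms(2,3) order.trans[OF _ assms(2)])
  have "c \<le> 4 * (1 - r)^2"
    unfolding c_def using assms by (intro one_minus_square_square_div_le) auto
  have integrand: "norm (of_real (u_kernel (Suc n) (of_real r * cis t)) * R t)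
      \<le> M * c * u_kernel n (of_real r * cis t)" if "t \<in> {0..2*pi}" for t
  proof -
    let ?u = "u_kernel (Suc n) (of_real r * cis t)"
    have "0 \<le> ?u"
      using assms by (intro u_kernel_nonneg) (simp add: norm_mult)
    then have "norm (of_real ?u * R t) = ?u * norm (R t)"
      by (simp add: norm_mult)
    also have "\<dots> \<le> ?u * (M * (1 - cos t))"
      by (rule mult_left_mono[OF bound[OF that] \<open>0 \<le> ?u\<close>])
    also have "\<dots> = M * (?u * (1 - cos t))"
      by (simp add: mult_ac)
    also have "\<dots> \<le> M * (c * u_kernel n (of_real r * cis t))"
      unfolding c_def using assms \<open>0 \<le> M\<close>
      by (intro mult_left_mono u_kernel_Suc_mult_one_minus_cos_le) auto
    finally show ?thesis by (simp add: mult_ac)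
  qed
  have "(\<lambda>t. u_kernel n (of_real r * cis t)) integrable_on {0..2*pi}"
    using assms by (intro integrable_continuous_real continuous_on_u_kernel_circle) auto
  then have G: "((\<lambda>t. M * c * u_kernel n (of_real r * cis t)) has_integral
      M * c * (2 * pi * circle_mean (u_kernel n) r)) {0..2*pi}"
    by (intro has_integral_mult_right) (simp add: circle_mean_def has_integral_integral)
  have "norm (integral {0..2*pi} (\<lambda>t. of_real (u_kernel (Suc n) (of_real r * cis t)) * R t))
      \<le> integral {0..2*pi} (\<lambda>t. M * c * u_kernel n (of_real r * cis t))"
    using assms integrand has_integral_integrable[OF G]
    by (intro integral_norm_bound_integral integrable_continuous_real continuous_intros
        continuous_on_u_kernel_circle) auto
  also have "\<dots> = M * c * (2 * pi * circle_mean (u_kernel n) r)"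
    by (rule integral_unique[OF G])
  also have "\<dots> \<le> M * (4 * (1 - r)^2) * (2 * pi * (\<Sum>k=0..2*n-2. \<bar>mean_coeff n k\<bar>))"
    using assms \<open>0 \<le> M\<close> \<open>0 \<le> c\<close> \<open>c \<le> 4 * (1 - r)^2\<close> circle_mean_u_kernel_le[of r n]
      circle_mean_u_kernel_nonneg[of r n]
    by (intro mult_mono) (auto intro!: mult_nonneg_nonneg)
  finally show ?thesis by (simp add: mult_ac)
qed

lemma pairing_u_kernel_decompose:
  assumes "0 \<le> r" "r < 1" and "continuous_on {0..2*pi} R"
    and decomp: "\<And>t. \<phi> (cis t) = \<phi> 1 + sin t *\<^sub>R c + R t"
  shows "pairing (dilate (\<lambda>z. of_real (u_kernel n z)) r) \<phi> =
    of_real (circle_mean (u_kernel n) r) * \<phi> 1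
      + of_real (1 / (2*pi)) * integral {0..2*pi} (\<lambda>t. of_real (u_kernel n (of_real r * cis t)) * R t)"
proof -
  define K where "K t = u_kernel n (of_real r * cis t)" for t
  define IR where "IR = integral {0..2*pi} (\<lambda>t. of_real (K t) * R t)"
  have "continuous_on {0..2*pi} K"
    unfolding K_def by (rule continuous_on_u_kernel_circle[OF assms(1,2)])
  then have "((\<lambda>t. of_real (K t) * \<phi> 1) has_integral of_real (integral {0..2*pi} K) * \<phi> 1) {0..2*pi}"
    by (intro has_integral_mult_left has_integral_of_real integrable_integral integrable_continuous_real)
  moreover have "((\<lambda>t. (K t * sin t) *\<^sub>R c) has_integral 0 *\<^sub>R c) {0..2*pi}"
    unfolding K_def by (intro has_integral_scaleR_left has_integral_u_kernel_sin assms)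
  moreover have "((\<lambda>t. of_real (K t) * R t) has_integral IR) {0..2*pi}"
    unfolding IR_def using \<open>continuous_on {0..2*pi} K\<close> assms(3)
    by (intro integrable_integral integrable_continuous_real continuous_intros)
  ultimately have "((\<lambda>t. of_real (K t) * \<phi> 1 + (K t * sin t) *\<^sub>R c + of_real (K t) * R t) has_integral
      of_real (integral {0..2*pi} K) * \<phi> 1 + 0 *\<^sub>R c + IR) {0..2*pi}"
    by (intro has_integral_add)
  moreover have "of_real (K t) * \<phi> (cis t) = of_real (K t) * \<phi> 1 + (K t * sin t) *\<^sub>R c + of_real (K t) * R t" for t
    unfolding decomp by (simp add: algebra_simps scaleR_conv_of_real)
  ultimately have "((\<lambda>t. of_real (K t) * \<phi> (cis t)) has_integral
      of_real (integral {0..2*pi} K) * \<phi> 1 + IR) {0..2*pi}"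
    by simp
  then show ?thesis
    unfolding K_def IR_def pairing_def dilate_def circle_mean_def
    by (simp add: integral_unique distrib_left mult.assoc)
qed

lemma pairing_u_kernel_minus_circle_mean:
  assumes "n \<ge> 2" and "C2_circle \<phi>"
  shows "(\<lambda>r. pairing (dilate (\<lambda>z. of_real (u_kernel n z)) r) \<phi> - of_real (circle_mean (u_kernel n) r) * \<phi> 1)
           \<in> O[at_left 1](\<lambda>r. of_real ((1 - r)^2))"
proof -
  obtain g' g'' where g': "\<And>t. ((\<lambda>s. \<phi> (cis s)) has_vector_derivative g' t) (at t)"
    and g'': "\<And>t. (g' has_vector_derivative g'' t) (at t)" and "continuous_on UNIV g''"
    using \<open>C2_circle \<phi>\<close> unfolding C2_circle_def by blast
  have "cis (t + 2*pi) = cis t" for t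
    by (simp add: complex_eq_iff)
  then have "\<phi> (cis (t + 2*pi)) = \<phi> (cis t)" for t
    by simp
  then obtain M where M: "\<And>t. t \<in> {0..2*pi} \<Longrightarrow> norm (\<phi> (cis t) - \<phi> 1 - sin t *\<^sub>R g' 0) \<le> M * (1 - cos t)"
    using periodic_second_order_bound[OF g' g'' \<open>continuous_on UNIV g''\<close>] by force
  define R where "R t = \<phi> (cis t) - \<phi> 1 - sin t *\<^sub>R g' 0" for t
  have "continuous_on {0..2*pi} R"
    unfolding R_def
    by (intro continuous_intros continuous_on_vector_derivative) (auto intro: has_vector_derivative_at_within g')
  define C where "C = (\<Sum>k=0..2*(n-1)-2. \<bar>mean_coeff (n-1) k\<bar>)"
  have "eventually (\<lambda>r. r \<in> {1/2<..<1}) (at_left (1::real))"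
    by (rule eventually_at_left_real) simp
  then have "eventually (\<lambda>r. norm (pairing (dilate (\<lambda>z. of_real (u_kernel n z)) r) \<phi>
      - of_real (circle_mean (u_kernel n) r) * \<phi> 1) \<le> 4 * M * C * norm (complex_of_real ((1 - r)^2))) (at_left 1)"
  proof eventually_elim
    case (elim r)
    have "pairing (dilate (\<lambda>z. of_real (u_kernel n z)) r) \<phi> - of_real (circle_mean (u_kernel n) r) * \<phi> 1 =
        of_real (1 / (2*pi)) * integral {0..2*pi} (\<lambda>t. of_real (u_kernel (Suc (n-1)) (of_real r * cis t)) * R t)"
      using elim \<open>n \<ge> 2\<close> \<open>continuous_on {0..2*pi} R\<close>
      by (subst pairing_u_kernel_decompose[where R = R and c = "g' 0"]) (auto simp: R_def)
    also have "norm \<dots> = 1 / (2*pi) *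
        norm (integral {0..2*pi} (\<lambda>t. of_real (u_kernel (Suc (n-1)) (of_real r * cis t)) * R t))"
      by (simp add: norm_mult norm_divide)
    also have "\<dots> \<le> 1 / (2*pi) * (8 * pi * M * C * (1 - r)^2)"
      unfolding C_def using elim \<open>n \<ge> 2\<close> \<open>continuous_on {0..2*pi} R\<close> M
      by (intro mult_left_mono norm_integral_u_kernel_remainder_le) (auto simp: R_def)
    also have "\<dots> = 4 * M * C * norm (complex_of_real ((1 - r)^2))"
      by (simp only: norm_of_real abs_power2) simp
    finally show ?case .
  qed
  then show ?thesis by (rule bigoI)
qed

lemma C2_circle_const: "C2_circle (\<lambda>_. c)"
  unfolding C2_circle_def by (intro exI[of _ "\<lambda>_. 0"]) (auto intro: derivative_eq_intros)

lemma pairing_u_kernel_expansion: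
  assumes "n \<ge> 2" and "C2_circle \<phi>"
  shows "(\<lambda>r. pairing (dilate (\<lambda>z. of_real (u_kernel n z)) r) \<phi>
            - (of_real (const_a n) * \<phi> 1 + of_real (const_b n * (1 - r)) * \<phi> 1))
           \<in> O[at_left 1](\<lambda>r. of_real ((1 - r)^2))"
proof -
  have "(\<lambda>r. of_real (circle_mean (u_kernel n) r - (const_a n + const_b n * (1 - r))))
      \<in> O[at_left 1](\<lambda>r. complex_of_real ((1 - r)^2))"
    unfolding landau_o.big.of_real_iff using assms by (intro circle_mean_u_kernel_expansion) simp
  then have "(\<lambda>r. \<phi> 1 * of_real (circle_mean (u_kernel n) r - (const_a n + const_b n * (1 - r))))
      \<in> O[at_left 1](\<lambda>r. complex_of_real ((1 - r)^2))"
    by (simp only: cmult_in_bigo_iff) blast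
  from sum_in_bigo(1)[OF pairing_u_kernel_minus_circle_mean[OF assms] this] show ?thesis
    by (simp add: algebra_simps)
qed

section \<open>Uniqueness of the coefficients\<close>

lemma affine_in_bigo_square_at_left_1:
  fixes c d :: real
  assumes "(\<lambda>r. c + d * (1 - r)) \<in> O[at_left 1](\<lambda>r. (1 - r)^2)"
  shows "c = 0 \<and> d = 0"
proof -
  obtain C where bound: "eventually (\<lambda>r. \<bar>c + d * (1 - r)\<bar> \<le> C * (1 - r)^2) (at_left 1)"
    using assms by (auto elim!: landau_o.bigE)
  have to_0: "((\<lambda>r. 1 - r) \<longlongrightarrow> 0) (at_left (1::real))"
    by (auto intro!: tendsto_eq_intros)
  have "((\<lambda>r. \<bar>c + d * (1 - r)\<bar>) \<longlongrightarrow> \<bar>c + d * 0\<bar>) (at_left 1)"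
    and "((\<lambda>r. C * (1 - r)^2) \<longlongrightarrow> C * 0^2) (at_left 1)"
    by (intro tendsto_intros to_0)+
  from tendsto_le[OF _ this(2,1) bound] have "\<bar>c + d * 0\<bar> \<le> C * 0^2"
    by simp
  then have "c = 0" by simp
  have "eventually (\<lambda>r. r \<in> {0<..<1}) (at_left (1::real))"
    by (rule eventually_at_left_real) simp
  with bound have d_bound: "eventually (\<lambda>r. \<bar>d\<bar> \<le> C * (1 - r)) (at_left 1)"
  proof eventually_elim
    case (elim r)
    then have "\<bar>d\<bar> * (1 - r) \<le> (C * (1 - r)) * (1 - r)"
      using \<open>c = 0\<close> by (simp add: abs_mult power2_eq_square mult_ac)
    then show ?case using elim by simp
  qed
  have "((\<lambda>r. C * (1 - r)) \<longlongrightarrow> C * 0) (at_left 1)"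
    by (intro tendsto_intros to_0)
  from tendsto_le[OF _ this tendsto_const d_bound] have "\<bar>d\<bar> \<le> C * 0"
    by simp
  with \<open>c = 0\<close> show ?thesis by simp
qed

lemma expansion_coefficients_unique:
  fixes f :: "real \<Rightarrow> complex"
  assumes "(\<lambda>r. f r - (of_real a + of_real (b * (1 - r)))) \<in> O[at_left 1](\<lambda>r. of_real ((1 - r)^2))"
    and "(\<lambda>r. f r - (of_real a' + of_real (b' * (1 - r)))) \<in> O[at_left 1](\<lambda>r. of_real ((1 - r)^2))"
  shows "a = a' \<and> b = b'"
proof -
  have "(\<lambda>r. of_real ((a - a') + (b - b') * (1 - r))) \<in> O[at_left 1](\<lambda>r. complex_of_real ((1 - r)^2))"
    using sum_in_bigo(2)[OF assms(2,1)] by (simp add: algebra_simps)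
  then have "(\<lambda>r. (a - a') + (b - b') * (1 - r)) \<in> O[at_left 1](\<lambda>r. (1 - r)^2)"
    by (simp only: landau_o.big.of_real_iff)
  then show ?thesis
    using affine_in_bigo_square_at_left_1 by force
qed

lemma pairing_u_kernel_coefficients_unique:
  assumes "n \<ge> 2"
    and "\<forall>\<phi>. C2_circle \<phi> \<longrightarrow>
      (\<lambda>r. pairing (dilate (\<lambda>z. of_real (u_kernel n z)) r) \<phi>
        - (of_real a * \<phi> 1 + of_real (b * (1 - r)) * \<phi> 1)) \<in> O[at_left 1](\<lambda>r. of_real ((1 - r)^2))"
  shows "a = const_a n \<and> b = const_b n"
proof (rule expansion_coefficients_unique)
  let ?f = "\<lambda>r. pairing (dilate (\<lambda>z. of_real (u_kernel n z)) r) (\<lambda>_. 1)"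
  show "(\<lambda>r. ?f r - (of_real a + of_real (b * (1 - r)))) \<in> O[at_left 1](\<lambda>r. of_real ((1 - r)^2))"
    using assms(2)[rule_format, OF C2_circle_const[of 1]] by (simp only: mult_1_right)
  show "(\<lambda>r. ?f r - (of_real (const_a n) + of_real (const_b n * (1 - r)))) \<in> O[at_left 1](\<lambda>r. of_real ((1 - r)^2))"
    using pairing_u_kernel_expansion[OF assms(1) C2_circle_const[of 1]] by (simp only: mult_1_right)
qed

theorem proposition1p1:
  fixes \<beta> :: nat
  assumes "\<beta> \<ge> 2"
  shows "((\<lambda>r. (1 / (2*pi)) * integral {0..2*pi} (\<lambda>t. u_kernel \<beta> (complex_of_real r * cis t))
            - (const_a \<beta> + const_b \<beta> * (1 - r)))
          \<in> O[at_left 1](\<lambda>r. (1 - r)^2)) \<and>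
       (\<forall>\<phi>. C2_circle \<phi> \<longrightarrow>
          (\<lambda>r. pairing (dilate (\<lambda>z. complex_of_real (u_kernel \<beta> z)) r) \<phi>
               - (complex_of_real (const_a \<beta>) * \<phi> 1
                  + complex_of_real (const_b \<beta> * (1 - r)) * \<phi> 1))
          \<in> O[at_left 1](\<lambda>r. complex_of_real ((1 - r)^2))) \<and>
       (\<forall>a' b' :: real. (\<forall>\<phi>. C2_circle \<phi> \<longrightarrow>
          (\<lambda>r. pairing (dilate (\<lambda>z. complex_of_real (u_kernel \<beta> z)) r) \<phi>
               - (complex_of_real a' * \<phi> 1 + complex_of_real (b' * (1 - r)) * \<phi> 1))
          \<in> O[at_left 1](\<lambda>r. complex_of_real ((1 - r)^2)))
        \<longrightarrow> a' = const_a \<beta> \<and> b' = const_b \<beta>)"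
proof -
  have "\<beta> \<ge> 1" using assms by simp
  then show ?thesis
    using circle_mean_u_kernel_expansion pairing_u_kernel_expansion[OF assms]
      pairing_u_kernel_coefficients_unique[OF assms]
    unfolding circle_mean_def by blast
qed

end
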